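(* Let $S$ be a $d\times d$ symmetric positive semidefinite matrix and $L,U$ symmetric $d\times d$ matrices with entries in $\mathbb{R}\cup\{-\infty,+\infty\}$ such that $L_{ij}\le0\le U_{ij}$ for $i\ne j$ and $L_{ii}=U_{ii}=0$. Consider the problem of minimizing $-\log\det K+\operatorname{tr}(SK)+\|K\|_{LU}$ over positive definite $K$. If the optimum exists, it is the unique positive definite matrix $\widehat K$, with $\widehat\Sigma=\widehat K^{-1}$, satisfying for all $i,j\in V=\{1,\dots,d\}$: $\widehat\Sigma_{ij}-S_{ij}\in\{L_{ij}\}$ if $\widehat K_{ij}<0$; $\widehat\Sigma_{ij}-S_{ij}\in[L_{ij},U_{ij}]$ if $\widehat K_{ij}=0$; $\widehat\Sigma_{ij}-S_{ij}\in\{U_{ij}\}$ if $\widehat K_{ij}>0$.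
   Context: $\|K\|_{LU}=\sum_{i\neq j}\max\{L_{ij}K_{ij},U_{ij}K_{ij}\}$ with the convention $\pm\infty\cdot0=0$. *)

theory Defs
  imports "HOL-Analysis.Analysis"
begin

definition psd_mat :: "real^'d^'d \<Rightarrow> bool" where
  "psd_mat A \<longleftrightarrow> transpose A = A \<and> (\<forall>x. 0 \<le> x \<bullet> (A *v x))"

definition pd_mat :: "real^'d^'d \<Rightarrow> bool" where
  "pd_mat A \<longleftrightarrow> transpose A = A \<and> (\<forall>x. x \<noteq> 0 \<longrightarrow> 0 < x \<bullet> (A *v x))"

text \<open>LU-norm: sum over off-diagonal pairs of max(L_ij K_ij, U_ij K_ij); ereal
  multiplication already satisfies (+-infinity) * 0 = 0.\<close>
definition LU_norm :: "ereal^'d^'d \<Rightarrow> ereal^'d^'d \<Rightarrow> real^'d^'d \<Rightarrow> ereal" where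
  "LU_norm L U K = (\<Sum>(i,j)\<in>{(i,j). i \<noteq> j}.
      max (L$i$j * ereal (K$i$j)) (U$i$j * ereal (K$i$j)))"

definition objective :: "real^'d^'d \<Rightarrow> ereal^'d^'d \<Rightarrow> ereal^'d^'d \<Rightarrow> real^'d^'d \<Rightarrow> ereal" where
  "objective S L U K = ereal (- ln (det K) + trace (S ** K)) + LU_norm L U K"

definition optimality_cond :: "real^'d^'d \<Rightarrow> ereal^'d^'d \<Rightarrow> ereal^'d^'d \<Rightarrow> real^'d^'d \<Rightarrow> bool" where
  "optimality_cond S L U K \<longleftrightarrow> (\<forall>i j.
      (K$i$j < 0 \<longrightarrow> ereal (matrix_inv K $i$j - S$i$j) = L$i$j) \<and>
      (K$i$j = 0 \<longrightarrow> L$i$j \<le> ereal (matrix_inv K $i$j - S$i$j) \<and>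
                        ereal (matrix_inv K $i$j - S$i$j) \<le> U$i$j) \<and>
      (K$i$j > 0 \<longrightarrow> ereal (matrix_inv K $i$j - S$i$j) = U$i$j))"

end

theory Submission
  imports Defs
begin

(* A minimiser Khat lies in the open cone of positive definite matrices, so it can be
   perturbed along the symmetric unit direction E_ij.  Along this line the smooth part
   -log det K + tr(S K) has derivative m (S_ij - Sigma_ij) at t = 0 by Jacobi's formula
   (m = 1 on the diagonal, 2 off it), while the penalty equals a constant plus m times the
   piecewise linear function x |-> max(L_ij x, U_ij x) at x = Khat_ij + t.  One-sided
   derivative tests at the minimum t = 0 say that Sigma_ij - S_ij is a subgradient of that
   function at Khat_ij, which is the stated condition.

   For uniqueness, subgradients of a convex function are monotone, so two solutions K, K'
   satisfy tr((Sigma - Sigma') (K - K')) >= 0.  With D = K' - K we have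
   Sigma - Sigma' = Sigma D Sigma', hence tr(Sigma' D Sigma D) <= 0.  Expanding Sigma' as a
   positive combination of rank-one matrices c c^T over a K'-orthogonal basis turns this
   trace into a sum of the nonnegative terms (D c)^T Sigma (D c), so D c = 0 for every basis
   vector c and D = 0. *)

section \<open>Positive definite matrices\<close>

lemma pd_matD:
  assumes "pd_mat A"
  shows "transpose A = A" and "x \<noteq> 0 \<Longrightarrow> 0 < x \<bullet> (A *v x)"
  using assms unfolding pd_mat_def by blast+

lemma symmetric_matrix_inner_commute:
  fixes A :: "real^'n^'n"
  assumes "transpose A = A"
  shows "x \<bullet> (A *v y) = y \<bullet> (A *v x)"
  by (metis assms dot_lmul_matrix inner_commute transpose_matrix_vector)

lemma symmetric_matrix_entry: "transpose A = A \<Longrightarrow> A$j$i = A$i$j"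
  by (metis transpose_def vec_lambda_beta)

lemma transpose_add: "transpose (A + B) = transpose A + transpose B"
  by (simp add: transpose_def vec_eq_iff)

lemma transpose_diff: "transpose (A - B) = transpose A - transpose B"
  by (simp add: transpose_def vec_eq_iff)

lemma matrix_inv_right: "invertible A \<Longrightarrow> A ** matrix_inv A = mat 1"
  and matrix_inv_left: "invertible A \<Longrightarrow> matrix_inv A ** A = mat 1"
  unfolding invertible_def matrix_inv_def by (metis (mono_tags, lifting) someI_ex)+

lemma matrix_diff_ldistrib: "(A::'a::ring_1^'n^'m) ** (B - C) = A ** B - A ** C"
  by (simp add: matrix_matrix_mult_def vec_eq_iff right_diff_distrib sum_subtractf)

lemma matrix_diff_rdistrib: "((A::'a::ring_1^'n^'m) - B) ** C = A ** C - B ** C"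
  by (simp add: matrix_matrix_mult_def vec_eq_iff left_diff_distrib sum_subtractf)

lemma transpose_matrix_inv_symmetric:
  fixes A :: "real^'n^'n"
  assumes "invertible A" "transpose A = A"
  shows "transpose (matrix_inv A) = matrix_inv A"
proof -
  have "transpose (matrix_inv A) ** A = transpose (A ** matrix_inv A)"
    by (simp add: matrix_transpose_mul assms(2))
  then have left_inv: "transpose (matrix_inv A) ** A = mat 1"
    by (simp add: matrix_inv_right[OF assms(1)])
  have "transpose (matrix_inv A) = (transpose (matrix_inv A) ** A) ** matrix_inv A"
    by (simp add: matrix_inv_right[OF assms(1)] flip: matrix_mul_assoc)
  then show ?thesis by (simp add: left_inv)
qed

lemma matrix_inv_diff:
  fixes A B :: "real^'n^'n"
  assumes "invertible A" "invertible B"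
  shows "matrix_inv A - matrix_inv B = matrix_inv A ** (B - A) ** matrix_inv B"
  by (simp add: matrix_diff_ldistrib matrix_diff_rdistrib assms matrix_inv_left matrix_inv_right
      flip: matrix_mul_assoc)

lemma pd_mat_invertible:
  fixes A :: "real^'n^'n"
  assumes "pd_mat A"
  shows "invertible A"
proof -
  have "A *v x = 0 \<Longrightarrow> x = 0" for x
    using pd_matD(2)[OF assms, of x] by fastforce
  then show ?thesis
    using matrix_left_invertible_ker invertible_left_inverse by blast
qed

lemma pd_mat_matrix_inv:
  fixes A :: "real^'n^'n"
  assumes "pd_mat A"
  shows "pd_mat (matrix_inv A)"
  unfolding pd_mat_def
proof (intro conjI allI impI)
  have inv: "invertible A" using assms by (rule pd_mat_invertible)
  then show "transpose (matrix_inv A) = matrix_inv A"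
    using pd_matD(1)[OF assms] by (rule transpose_matrix_inv_symmetric)
  fix x :: "real^'n"
  assume "x \<noteq> 0"
  define y where "y = matrix_inv A *v x"
  have x: "x = A *v y"
    by (simp add: y_def matrix_vector_mul_assoc matrix_inv_right[OF inv])
  with \<open>x \<noteq> 0\<close> have "y \<noteq> 0" by auto
  then have "0 < y \<bullet> (A *v y)" by (rule pd_matD(2)[OF assms])
  also have "\<dots> = x \<bullet> y"
    by (simp add: x inner_commute)
  finally show "0 < x \<bullet> (matrix_inv A *v x)"
    by (simp add: y_def)
qed

lemma pd_mat_mat_1: "pd_mat (mat 1 :: real^'n^'n)"
  by (simp add: pd_mat_def)

lemma pd_mat_convex_comb:
  fixes A B :: "real^'n^'n"
  assumes "pd_mat A" "pd_mat B" "0 \<le> s" "s \<le> 1"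
  shows "pd_mat ((1 - s) *\<^sub>R A + s *\<^sub>R B)"
  unfolding pd_mat_def
proof (intro conjI allI impI)
  show "transpose ((1 - s) *\<^sub>R A + s *\<^sub>R B) = (1 - s) *\<^sub>R A + s *\<^sub>R B"
    using pd_matD(1)[OF assms(1)] pd_matD(1)[OF assms(2)]
    by (simp add: transpose_add transpose_scalar)
  fix x :: "real^'n"
  assume "x \<noteq> 0"
  then have "0 < x \<bullet> (A *v x)" "0 < x \<bullet> (B *v x)"
    using pd_matD(2)[OF assms(1)] pd_matD(2)[OF assms(2)] by blast+
  then have "0 < (1 - s) * (x \<bullet> (A *v x)) + s * (x \<bullet> (B *v x))"
    using assms(3,4) by (cases "s = 1") (auto intro: add_pos_nonneg)
  then show "0 < x \<bullet> (((1 - s) *\<^sub>R A + s *\<^sub>R B) *v x)"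
    by (simp add: matrix_vector_mult_add_rdistrib inner_add_right
        flip: scaleR_matrix_vector_assoc)
qed

lemma pd_mat_det_pos:
  fixes A :: "real^'n^'n"
  assumes "pd_mat A"
  shows "0 < det A"
proof (rule ccontr)
  assume "\<not> 0 < det A"
  define f where "f s = det ((1 - s) *\<^sub>R mat 1 + s *\<^sub>R A)" for s
  have "continuous_on {0..1} f"
    unfolding f_def det_def by (intro continuous_intros)
  moreover have "f 1 \<le> 0 \<and> 0 \<le> f 0"
    using \<open>\<not> 0 < det A\<close> by (simp add: f_def)
  ultimately obtain s where s: "0 \<le> s" "s \<le> 1" "f s = 0"
    using IVT2'[of f 1 0 0] by auto
  have "pd_mat ((1 - s) *\<^sub>R mat 1 + s *\<^sub>R A)"
    using pd_mat_convex_comb[OF pd_mat_mat_1 assms s(1,2)] .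
  then have "f s \<noteq> 0"
    unfolding f_def using invertible_det_nz pd_mat_invertible by blast
  with s(3) show False by simp
qed

lemma pd_mat_coercive:
  fixes A :: "real^'n^'n"
  assumes "pd_mat A"
  obtains c where "0 < c" "\<And>x. c * (x \<bullet> x) \<le> x \<bullet> (A *v x)"
proof -
  have "continuous_on (sphere 0 1) (\<lambda>x::real^'n. x \<bullet> (A *v x))"
    by (intro continuous_intros linear_continuous_on matrix_vector_mul_linear)
  moreover have "sphere (0::real^'n) 1 \<noteq> {}" by simp
  ultimately obtain x0 where x0: "x0 \<in> sphere 0 1"
    and min: "\<And>y. y \<in> sphere 0 1 \<Longrightarrow> x0 \<bullet> (A *v x0) \<le> y \<bullet> (A *v y)"
    using continuous_attains_inf[OF compact_sphere] by blast
  define c where "c = x0 \<bullet> (A *v x0)"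
  have "x0 \<noteq> 0" using x0 by auto
  then have "0 < c" unfolding c_def by (rule pd_matD(2)[OF assms])
  moreover have "c * (x \<bullet> x) \<le> x \<bullet> (A *v x)" for x
  proof (cases "x = 0")
    case False
    define y where "y = (1 / norm x) *\<^sub>R x"
    have "c \<le> y \<bullet> (A *v y)"
      unfolding c_def using False by (intro min) (simp add: y_def)
    also have "\<dots> = (x \<bullet> (A *v x)) / (norm x)\<^sup>2"
      by (simp add: y_def matrix_vector_mult_scaleR power2_eq_square)
    finally have "c * (norm x)\<^sup>2 \<le> x \<bullet> (A *v x)"
      using False by (simp add: field_simps)
    then show ?thesis by (simp add: power2_norm_eq_inner)
  qed simp
  ultimately show ?thesis using that by blast
qed

lemma quadratic_form_bounded:
  fixes E :: "real^'n^'n"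
  obtains C where "\<And>x. \<bar>x \<bullet> (E *v x)\<bar> \<le> C * (x \<bullet> x)"
proof -
  obtain C where C: "\<And>x. norm (E *v x) \<le> norm x * C"
    using bounded_linear.bounded[OF matrix_vector_mul_bounded_linear] by blast
  have "\<bar>x \<bullet> (E *v x)\<bar> \<le> C * (x \<bullet> x)" for x
  proof -
    have "\<bar>x \<bullet> (E *v x)\<bar> \<le> norm x * norm (E *v x)" by (rule Cauchy_Schwarz_ineq2)
    also have "\<dots> \<le> norm x * (norm x * C)" by (simp add: C mult_left_mono)
    finally show ?thesis by (simp add: dot_square_norm power2_eq_square mult_ac)
  qed
  then show ?thesis using that by blast
qed

lemma pd_mat_add_small:
  fixes A E :: "real^'n^'n"
  assumes "pd_mat A" "transpose E = E"
  obtains d where "0 < d" "\<And>t. \<bar>t\<bar> < d \<Longrightarrow> pd_mat (A + t *\<^sub>R E)"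
proof -
  obtain c where c: "0 < c" "\<And>x. c * (x \<bullet> x) \<le> x \<bullet> (A *v x)"
    using pd_mat_coercive[OF assms(1)] by blast
  obtain C where C: "\<And>x. \<bar>x \<bullet> (E *v x)\<bar> \<le> C * (x \<bullet> x)"
    using quadratic_form_bounded by blast
  have "0 < \<bar>C\<bar> + 1" by simp
  define d where "d = c / (\<bar>C\<bar> + 1)"
  have "pd_mat (A + t *\<^sub>R E)" if t: "\<bar>t\<bar> < d" for t
    unfolding pd_mat_def
  proof (intro conjI allI impI)
    show "transpose (A + t *\<^sub>R E) = A + t *\<^sub>R E"
      using pd_matD(1)[OF assms(1)] assms(2) by (simp add: transpose_add transpose_scalar)
    fix x :: "real^'n"
    assume "x \<noteq> 0"
    then have "0 < x \<bullet> x" by simp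
    have "\<bar>t * (x \<bullet> (E *v x))\<bar> \<le> \<bar>t\<bar> * (C * (x \<bullet> x))"
      using C[of x] by (simp add: abs_mult mult_left_mono)
    also have "\<dots> \<le> \<bar>t\<bar> * ((\<bar>C\<bar> + 1) * (x \<bullet> x))"
      using \<open>0 < x \<bullet> x\<close> by (intro mult_left_mono mult_right_mono) auto
    also have "\<dots> < d * ((\<bar>C\<bar> + 1) * (x \<bullet> x))"
      using t \<open>0 < x \<bullet> x\<close> \<open>0 < \<bar>C\<bar> + 1\<close> by (intro mult_strict_right_mono) auto
    also have "\<dots> = c * (x \<bullet> x)"
      using \<open>0 < \<bar>C\<bar> + 1\<close> by (simp add: d_def)
    finally have "- (c * (x \<bullet> x)) < t * (x \<bullet> (E *v x))"
      by (simp add: abs_less_iff)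
    then have "0 < x \<bullet> (A *v x) + t * (x \<bullet> (E *v x))"
      using c(2)[of x] by linarith
    then show "0 < x \<bullet> ((A + t *\<^sub>R E) *v x)"
      by (simp add: matrix_vector_mult_add_rdistrib inner_add_right
          flip: scaleR_matrix_vector_assoc)
  qed
  moreover have "0 < d"
    unfolding d_def using c(1) \<open>0 < \<bar>C\<bar> + 1\<close> by simp
  ultimately show ?thesis using that by blast
qed

section \<open>Derivative of the log-determinant\<close>

lemma permutes_non_id_moves_other:
  assumes "p permutes (UNIV :: 'n set)" "p \<noteq> id"
  obtains j where "j \<noteq> i" "p j \<noteq> j"
proof -
  obtain k where k: "p k \<noteq> k" using assms(2) by (auto simp: fun_eq_iff)
  then have "p (p k) \<noteq> p k"
    using permutes_inj[OF assms(1)] by (auto dest: injD)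
  show ?thesis
  proof (cases "k = i")
    case True
    with k \<open>p (p k) \<noteq> p k\<close> show ?thesis by (intro that[of "p k"]) auto
  next
    case False
    with k show ?thesis by (intro that[of k])
  qed
qed

lemma has_real_derivative_det_mat_1_plus:
  fixes M :: "real^'n^'n"
  shows "((\<lambda>t. det (mat 1 + t *\<^sub>R M)) has_real_derivative trace M) (at 0)"
proof -
  let ?P = "{p. p permutes (UNIV :: 'n set)}"
  let ?e = "\<lambda>p j. if j = p j then 1 else 0 :: real"
  let ?D = "\<lambda>p. \<Sum>i\<in>UNIV. M$i$(p i) * (\<Prod>j\<in>UNIV - {i}. ?e p j + 0 * M$j$(p j))"
  have det_eq: "det (mat 1 + t *\<^sub>R M) =
      (\<Sum>p\<in>?P. of_int (sign p) * (\<Prod>i\<in>UNIV. ?e p i + t * M$i$(p i)))" for t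
    by (simp add: det_def mat_def)
  have "((\<lambda>t. \<Sum>p\<in>?P. of_int (sign p) * (\<Prod>i\<in>UNIV. ?e p i + t * M$i$(p i)))
      has_real_derivative (\<Sum>p\<in>?P. of_int (sign p) * ?D p)) (at 0)"
    by (intro DERIV_sum DERIV_cmult has_field_derivative_prod derivative_eq_intros) auto
  \<comment> \<open>Only the identity permutation contributes: any other one moves a point besides
    \<open>i\<close>, so the remaining product has a zero factor.\<close>
  moreover have non_id: "?D p = 0" if p: "p \<in> ?P" "p \<noteq> id" for p
  proof (intro sum.neutral ballI)
    fix i
    have "p permutes UNIV" using p(1) by simp
    then obtain j where "j \<noteq> i" "p j \<noteq> j"
      using p(2) by (rule permutes_non_id_moves_other)
    then have "(\<Prod>j\<in>UNIV - {i}. ?e p j + 0 * M$j$(p j)) = 0"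
      by (intro prod_zero bexI[of _ j]) auto
    then show "M$i$(p i) * (\<Prod>j\<in>UNIV - {i}. ?e p j + 0 * M$j$(p j)) = 0" by simp
  qed
  have id: "id \<in> ?P" by simp
  have "(\<Sum>p\<in>?P. of_int (sign p) * ?D p) = of_int (sign (id :: 'n \<Rightarrow> 'n)) * ?D id"
    using non_id by (subst sum.remove[OF _ id]) (simp_all add: sum.neutral)
  ultimately show ?thesis
    by (simp add: det_eq trace_def)
qed

lemma has_real_derivative_ln_det:
  fixes A E :: "real^'n^'n"
  assumes "invertible A" "0 < det A"
  shows "((\<lambda>t. ln (det (A + t *\<^sub>R E))) has_real_derivative trace (matrix_inv A ** E)) (at 0)"
proof -
  have factor: "det (A + t *\<^sub>R E) = det A * det (mat 1 + t *\<^sub>R (matrix_inv A ** E))" for t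
  proof -
    have "A + t *\<^sub>R E = A ** (mat 1 + t *\<^sub>R (matrix_inv A ** E))"
      by (simp add: matrix_add_ldistrib matrix_scalar_ac matrix_mul_assoc
          matrix_inv_right[OF assms(1)] flip: scalar_matrix_assoc)
    then show ?thesis by (simp add: det_mul)
  qed
  have "((\<lambda>t. det A * det (mat 1 + t *\<^sub>R (matrix_inv A ** E)))
      has_real_derivative det A * trace (matrix_inv A ** E)) (at 0)"
    by (intro DERIV_cmult has_real_derivative_det_mat_1_plus)
  moreover have "0 < det A * det (mat 1 + 0 *\<^sub>R (matrix_inv A ** E))"
    using assms(2) by simp
  ultimately have "((\<lambda>t. ln (det A * det (mat 1 + t *\<^sub>R (matrix_inv A ** E))))
      has_real_derivative inverse (det A) * (det A * trace (matrix_inv A ** E))) (at 0)"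
    using DERIV_chain2[OF DERIV_ln] by fastforce
  then show ?thesis
    using assms(2) by (simp add: factor field_simps)
qed

lemma has_real_derivative_logdet_trace:
  fixes A S E :: "real^'n^'n"
  assumes "pd_mat A"
  shows "((\<lambda>t. - ln (det (A + t *\<^sub>R E)) + trace (S ** (A + t *\<^sub>R E)))
           has_real_derivative trace ((S - matrix_inv A) ** E)) (at 0)"
proof -
  have "trace (S ** (A + t *\<^sub>R E)) = trace (S ** A) + t * trace (S ** E)" for t
    by (simp add: matrix_add_ldistrib trace_add matrix_scalar_ac trace_def sum_distrib_left
        sum.distrib flip: scalar_matrix_assoc)
  moreover have "((\<lambda>t. - ln (det (A + t *\<^sub>R E)) + (trace (S ** A) + t * trace (S ** E)))
      has_real_derivative - trace (matrix_inv A ** E) + trace (S ** E)) (at 0)"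
  proof (intro DERIV_add DERIV_minus)
    show "((\<lambda>t. ln (det (A + t *\<^sub>R E))) has_real_derivative trace (matrix_inv A ** E)) (at 0)"
      using pd_mat_invertible[OF assms] pd_mat_det_pos[OF assms] by (rule has_real_derivative_ln_det)
  qed (auto intro!: derivative_eq_intros)
  ultimately show ?thesis
    by (simp add: matrix_diff_rdistrib trace_sub)
qed

definition sym_unit :: "'n \<Rightarrow> 'n \<Rightarrow> real^'n^'n" where
  "sym_unit i j = (\<chi> a b. if (a = i \<and> b = j) \<or> (a = j \<and> b = i) then 1 else 0)"

lemma transpose_sym_unit: "transpose (sym_unit i j) = sym_unit i j"
  by (auto simp: sym_unit_def transpose_def vec_eq_iff)

lemma trace_mul_sym_unit:
  fixes A :: "real^'n^'n"
  assumes "transpose A = A"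
  shows "trace (A ** sym_unit i j) = (if i = j then 1 else 2) * A$i$j"
proof -
  have "(A ** sym_unit i j)$a$a =
      (if a = j then A$j$i else 0) + (if a = i \<and> i \<noteq> j then A$i$j else 0)" for a
  proof -
    have "(A ** sym_unit i j)$a$a = (\<Sum>b\<in>UNIV.
        (if b = i then if a = j then A$a$b else 0 else 0) +
        (if b = j then if a = i \<and> i \<noteq> j then A$a$b else 0 else 0))"
      by (auto simp: matrix_matrix_mult_def sym_unit_def intro!: sum.cong)
    then show ?thesis by (auto simp: sum.distrib)
  qed
  then show ?thesis
    by (simp add: trace_def sum.distrib symmetric_matrix_entry[OF assms, of i j])
qed

lemma has_real_derivative_logdet_trace_sym_unit:
  fixes A S :: "real^'n^'n"
  assumes "pd_mat A" "transpose S = S"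
  shows "((\<lambda>t. - ln (det (A + t *\<^sub>R sym_unit i j)) + trace (S ** (A + t *\<^sub>R sym_unit i j)))
           has_real_derivative (if i = j then 1 else 2) * (S$i$j - matrix_inv A$i$j)) (at 0)"
proof -
  have "transpose (S - matrix_inv A) = S - matrix_inv A"
    using assms(2) pd_matD(1)[OF pd_mat_matrix_inv[OF assms(1)]] by (simp add: transpose_diff)
  then show ?thesis
    using has_real_derivative_logdet_trace[OF assms(1), where S = S and E = "sym_unit i j"]
    by (simp add: trace_mul_sym_unit)
qed

section \<open>The LU penalty and its subgradients\<close>

definition lu_penalty :: "ereal \<Rightarrow> ereal \<Rightarrow> real \<Rightarrow> ereal" where
  "lu_penalty l u x = max (l * ereal x) (u * ereal x)"

text \<open>For \<open>l \<le> 0 \<le> u\<close> this says that \<open>a\<close> lies in the subdifferential of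
  \<open>lu_penalty l u\<close> at \<open>k\<close>.\<close>

definition lu_subgradient :: "ereal \<Rightarrow> ereal \<Rightarrow> real \<Rightarrow> real \<Rightarrow> bool" where
  "lu_subgradient l u k a \<longleftrightarrow>
     (k < 0 \<longrightarrow> ereal a = l) \<and>
     (k = 0 \<longrightarrow> l \<le> ereal a \<and> ereal a \<le> u) \<and>
     (0 < k \<longrightarrow> ereal a = u)"

lemma optimality_cond_iff_lu_subgradient:
  "optimality_cond S L U K \<longleftrightarrow>
     (\<forall>i j. lu_subgradient (L$i$j) (U$i$j) (K$i$j) (matrix_inv K$i$j - S$i$j))"
  by (simp add: optimality_cond_def lu_subgradient_def)

lemma LU_norm_eq_sum_lu_penalty:
  "LU_norm L U K = (\<Sum>(i, j)\<in>{(i, j). i \<noteq> j}. lu_penalty (L$i$j) (U$i$j) (K$i$j))"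
  by (simp add: LU_norm_def lu_penalty_def)

lemma lu_penalty_nonneg_arg:
  assumes "l \<le> 0" "0 \<le> u" "0 \<le> x"
  shows "lu_penalty l u x = u * ereal x"
proof -
  have "l * ereal x \<le> 0" "0 \<le> u * ereal x"
    using assms by (auto simp: ereal_mult_le_0_iff ereal_zero_le_0_iff)
  then show ?thesis by (simp add: lu_penalty_def max_absorb2)
qed

lemma lu_penalty_uminus: "lu_penalty (- u) (- l) (- x) = lu_penalty l u x"
  by (simp add: lu_penalty_def max.commute flip: uminus_ereal.simps(1))

lemma lu_penalty_nonpos_arg:
  assumes "l \<le> 0" "0 \<le> u" "x \<le> 0"
  shows "lu_penalty l u x = l * ereal x"
  using lu_penalty_nonneg_arg[of "- u" "- l" "- x"] assms
  by (simp add: lu_penalty_uminus flip: uminus_ereal.simps(1))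

lemma lu_penalty_nonneg:
  assumes "l \<le> 0" "0 \<le> u"
  shows "0 \<le> lu_penalty l u x"
  using assms lu_penalty_nonneg_arg lu_penalty_nonpos_arg[of l u x]
  by (cases "0 \<le> x") (auto simp: ereal_zero_le_0_iff)

lemma LU_norm_mat_1: "LU_norm L U (mat 1) = 0"
  unfolding LU_norm_eq_sum_lu_penalty
  by (intro sum.neutral) (auto simp: mat_def lu_penalty_def simp flip: zero_ereal_def)

lemma LU_norm_add_sym_unit:
  fixes K :: "real^'n^'n" and L U :: "ereal^'n^'n"
  assumes "transpose L = L" "transpose U = U" "transpose K = K"
    and "\<And>a. L$a$a = 0" "\<And>a. U$a$a = 0"
  shows "LU_norm L U (K + t *\<^sub>R sym_unit i j) =
    (\<Sum>(a, b)\<in>{(a, b). a \<noteq> b} - {(i, j), (j, i)}. lu_penalty (L$a$b) (U$a$b) (K$a$b)) +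
    ereal (if i = j then 1 else 2) * lu_penalty (L$i$j) (U$i$j) (K$i$j + t)"
    (is "_ = ?rest + _")
proof -
  let ?off = "{(a, b). a \<noteq> b} :: ('n \<times> 'n) set"
  let ?g = "\<lambda>(a, b). lu_penalty (L$a$b) (U$a$b) ((K + t *\<^sub>R sym_unit i j)$a$b)"
  have "sum ?g (?off - {(i, j), (j, i)}) = ?rest"
    by (intro sum.cong refl) (auto simp: sym_unit_def split: if_splits)
  show ?thesis
  proof (cases "i = j")
    case True
    then have "?off - {(i, j), (j, i)} = ?off" by auto
    with True \<open>sum ?g _ = ?rest\<close> show ?thesis
      by (simp add: LU_norm_eq_sum_lu_penalty assms(4,5) lu_penalty_def)
  next
    case False
    then have off: "?off = insert (i, j) (insert (j, i) (?off - {(i, j), (j, i)}))" by auto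
    have "?g (j, i) = ?g (i, j)"
      using assms(1-3) by (simp add: symmetric_matrix_entry[of _ i j] sym_unit_def)
    moreover have "?g (i, j) = lu_penalty (L$i$j) (U$i$j) (K$i$j + t)"
      by (simp add: sym_unit_def)
    moreover have double: "ereal 2 * x = x + x" for x :: ereal by (cases x) simp_all
    ultimately show ?thesis
      using False \<open>sum ?g _ = ?rest\<close>
      by (subst LU_norm_eq_sum_lu_penalty, subst off) (simp add: double, simp add: ac_simps)
  qed
qed

lemma has_real_derivative_nonneg_at_right_min:
  fixes f :: "real \<Rightarrow> real"
  assumes "(f has_real_derivative D) (at x)" "0 < d"
    and "\<And>t. x < t \<Longrightarrow> t < x + d \<Longrightarrow> f x \<le> f t"
  shows "0 \<le> D"
proof (rule ccontr)
  assume "\<not> 0 \<le> D"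
  then obtain e where e: "0 < e" "\<And>h. 0 < h \<Longrightarrow> h < e \<Longrightarrow> f (x + h) < f x"
    using DERIV_neg_dec_right[OF assms(1)] by force
  define h where "h = min e d / 2"
  have "0 < h" "h < e" "h < d" using e(1) assms(2) by (auto simp: h_def)
  then show False using e(2)[of h] assms(3)[of "x + h"] by fastforce
qed

lemma has_real_derivative_nonpos_at_left_min:
  fixes f :: "real \<Rightarrow> real"
  assumes "(f has_real_derivative D) (at x)" "0 < d"
    and "\<And>t. x - d < t \<Longrightarrow> t < x \<Longrightarrow> f x \<le> f t"
  shows "D \<le> 0"
proof -
  have "0 \<le> - D"
  proof (rule has_real_derivative_nonneg_at_right_min)
    show "((\<lambda>t. f (- t)) has_real_derivative - D) (at (- x))"
      using assms(1) DERIV_mirror[of f D "- x"] by simp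
    show "f (- (- x)) \<le> f (- t)" if "- x < t" "t < - x + d" for t
      using assms(3)[of "- t"] that by simp
  qed (rule assms(2))
  then show ?thesis by simp
qed

lemma lu_subgradient_upper_half:
  fixes \<phi> :: "real \<Rightarrow> real"
  assumes lu: "l \<le> 0" "0 \<le> u" and "0 < c" "0 < d"
    and deriv: "(\<phi> has_real_derivative - c * a) (at 0)"
    and finite: "lu_penalty l u k \<noteq> \<infinity>"
    and min: "\<And>t. \<bar>t\<bar> < d \<Longrightarrow>
      ereal (\<phi> 0) + ereal c * lu_penalty l u k \<le> ereal (\<phi> t) + ereal c * lu_penalty l u (k + t)"
  shows "(0 \<le> k \<longrightarrow> ereal a \<le> u) \<and> (0 < k \<longrightarrow> u \<le> ereal a)"
proof (cases u)
  case PInf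
  then have "\<not> 0 < k"
    using finite lu_penalty_nonneg_arg[OF lu, of k] by auto
  then show ?thesis using PInf by simp
next
  case MInf
  with lu(2) show ?thesis by simp
next
  case (real v)
  have "\<phi> 0 \<le> \<phi> t + c * v * t" if "\<bar>t\<bar> < d" "0 \<le> k" "0 \<le> k + t" for t
    using min[OF that(1)] lu_penalty_nonneg_arg[OF lu that(2)] lu_penalty_nonneg_arg[OF lu that(3)]
    by (simp add: real algebra_simps)
  moreover have "((\<lambda>t. \<phi> t + c * v * t) has_real_derivative c * (v - a)) (at 0)"
    using deriv by (auto intro!: derivative_eq_intros simp: algebra_simps)
  ultimately have "0 \<le> k \<longrightarrow> 0 \<le> c * (v - a)" and "0 < k \<longrightarrow> c * (v - a) \<le> 0"
    using has_real_derivative_nonneg_at_right_min[OF _ \<open>0 < d\<close>, of "\<lambda>t. \<phi> t + c * v * t"]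
      has_real_derivative_nonpos_at_left_min[of "\<lambda>t. \<phi> t + c * v * t" _ 0 "min d k"]
    by (auto simp: \<open>0 < d\<close>)
  then show ?thesis
    using \<open>0 < c\<close> by (auto simp: real mult_le_0_iff zero_le_mult_iff)
qed

lemma lu_subgradient_of_local_min:
  fixes \<phi> :: "real \<Rightarrow> real"
  assumes lu: "l \<le> 0" "0 \<le> u" and "0 < c" "0 < d"
    and deriv: "(\<phi> has_real_derivative - c * a) (at 0)"
    and finite: "lu_penalty l u k \<noteq> \<infinity>"
    and min: "\<And>t. \<bar>t\<bar> < d \<Longrightarrow>
      ereal (\<phi> 0) + ereal c * lu_penalty l u k \<le> ereal (\<phi> t) + ereal c * lu_penalty l u (k + t)"
  shows "lu_subgradient l u k a"
proof -
  have upper: "(0 \<le> k \<longrightarrow> ereal a \<le> u) \<and> (0 < k \<longrightarrow> u \<le> ereal a)"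
    using lu_subgradient_upper_half[OF assms] .
  \<comment> \<open>The lower half is the upper one for the reflected problem \<open>t \<mapsto> -t\<close>.\<close>
  have "(0 \<le> - k \<longrightarrow> ereal (- a) \<le> - l) \<and> (0 < - k \<longrightarrow> - l \<le> ereal (- a))"
  proof (rule lu_subgradient_upper_half[where \<phi> = "\<lambda>t. \<phi> (- t)" and c = c and d = d])
    show "((\<lambda>t. \<phi> (- t)) has_real_derivative - c * - a) (at 0)"
      using deriv DERIV_mirror[of \<phi> "- c * a" 0] by simp
    show "ereal (\<phi> (- 0)) + ereal c * lu_penalty (- u) (- l) (- k)
        \<le> ereal (\<phi> (- t)) + ereal c * lu_penalty (- u) (- l) (- k + t)" if "\<bar>t\<bar> < d" for t
      using min[of "- t"] that lu_penalty_uminus[of u l "k - t"] by (simp add: lu_penalty_uminus)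
  qed (use assms in \<open>simp_all add: lu_penalty_uminus\<close>)
  then have lower: "(k \<le> 0 \<longrightarrow> l \<le> ereal a) \<and> (k < 0 \<longrightarrow> ereal a \<le> l)"
    by (simp flip: uminus_ereal.simps(1))
  show ?thesis
    unfolding lu_subgradient_def using upper lower by (auto intro: antisym)
qed

lemma lu_subgradient_monotone:
  assumes "l \<le> u" "lu_subgradient l u k a" "lu_subgradient l u k' a'"
  shows "0 \<le> (a - a') * (k - k')"
proof -
  have ordered: "q \<le> p" if "y < x" "lu_subgradient l u x p" "lu_subgradient l u y q" for x y p q
  proof (cases "0 < x")
    case True
    then have "ereal q \<le> ereal p"
      using that \<open>l \<le> u\<close> unfolding lu_subgradient_def by (cases "y < 0"; cases "y = 0") auto
    then show ?thesis by simp
  next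
    case False
    then have "ereal q \<le> ereal p"
      using that unfolding lu_subgradient_def by (cases "x < 0") auto
    then show ?thesis by simp
  qed
  show ?thesis
    using ordered[where x = k and p = a and y = k' and q = a']
      ordered[where x = k' and p = a' and y = k and q = a] assms(2,3)
    by (cases k k' rule: linorder_cases) (auto intro: mult_nonpos_nonpos)
qed

section \<open>Uniqueness of solutions of the optimality condition\<close>

definition outer_prod :: "real^'n \<Rightarrow> real^'n \<Rightarrow> real^'n^'n" where
  "outer_prod v w = (\<chi> a b. v$a * w$b)"

lemma outer_prod_mult_vector: "outer_prod v w *v x = (w \<bullet> x) *\<^sub>R v"
  by (simp add: outer_prod_def vec_eq_iff matrix_vector_mult_def inner_vec_def sum_distrib_left mult_ac)

lemma trace_outer_prod_mult: "trace (outer_prod v v ** M) = v \<bullet> (M *v v)"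
proof -
  have "trace (outer_prod v v ** M) = (\<Sum>i\<in>UNIV. \<Sum>k\<in>UNIV. v$i * (v$k * M$k$i))"
    by (simp add: trace_def outer_prod_def matrix_matrix_mult_def mult_ac)
  also have "\<dots> = v \<bullet> (M *v v)"
    by (subst sum.swap) (simp add: matrix_vector_mult_def inner_vec_def sum_distrib_left mult_ac)
  finally show ?thesis .
qed

lemma sum_matrix_vector_mult: "(\<Sum>a\<in>S. f a) *v x = (\<Sum>a\<in>S. f a *v x)"
  by (induction S rule: infinite_finite_induct) (auto simp: matrix_vector_mult_add_rdistrib)

lemma sum_matrix_mult: "(\<Sum>a\<in>S. f a) ** M = (\<Sum>a\<in>S. f a ** M)"
  by (induction S rule: infinite_finite_induct)
    (auto simp: matrix_matrix_mult_def vec_eq_iff distrib_right sum.distrib)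

lemma trace_sum: "trace (\<Sum>a\<in>S. f a) = (\<Sum>a\<in>S. trace (f a))"
  by (induction S rule: infinite_finite_induct) (auto simp: trace_def sum.distrib)

lemma trace_scaleR: "trace (c *\<^sub>R A) = c * trace A"
  by (simp add: trace_def sum_distrib_left)

lemma trace_mult_symmetric:
  fixes A B :: "real^'n^'n"
  assumes "transpose B = B"
  shows "trace (A ** B) = (\<Sum>i\<in>UNIV. \<Sum>j\<in>UNIV. A$i$j * B$i$j)"
  by (simp add: trace_def matrix_matrix_mult_def symmetric_matrix_entry[OF assms])

lemma A_orthogonal_projection_step:
  fixes A :: "real^'n^'n"
  assumes "pd_mat A" "finite C" "pairwise (\<lambda>u v. u \<bullet> (A *v v) = 0) C" "y \<in> C"
  shows "y \<bullet> (A *v (x - (\<Sum>c\<in>C. (c \<bullet> (A *v x) / (c \<bullet> (A *v c))) *\<^sub>R c))) = 0"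
proof -
  have "(\<Sum>c\<in>C. (c \<bullet> (A *v x) / (c \<bullet> (A *v c))) * (y \<bullet> (A *v c)))
      = (y \<bullet> (A *v x) / (y \<bullet> (A *v y))) * (y \<bullet> (A *v y))"
    using assms(3,4) by (subst sum.remove[OF assms(2,4)], subst sum.neutral) (auto simp: pairwise_def)
  also have "\<dots> = y \<bullet> (A *v x)"
    using pd_matD(2)[OF assms(1), of y] by (cases "y = 0") auto
  finally show ?thesis
    by (simp add: matrix_vector_mult_diff_distrib inner_diff_right inner_sum_right vec.sum
        matrix_vector_mult_scaleR symmetric_matrix_inner_commute[OF pd_matD(1)[OF assms(1)], of y x])
qed

lemma A_orthogonal_spanning_set_exists:
  fixes A :: "real^'n^'n" and S :: "(real^'n) set"
  assumes "pd_mat A" "finite S"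
  obtains C where "finite C" "span C = span S" "pairwise (\<lambda>u v. u \<bullet> (A *v v) = 0) C"
proof -
  have "\<exists>C. finite C \<and> span C = span S \<and> pairwise (\<lambda>u v. u \<bullet> (A *v v) = 0) C"
    using assms(2)
  proof (induction S rule: finite_induct)
    case empty
    show ?case by (intro exI[of _ "{}"]) simp
  next
    case (insert a S)
    then obtain C where C: "finite C" "span C = span S" "pairwise (\<lambda>u v. u \<bullet> (A *v v) = 0) C"
      by blast
    define a' where "a' = a - (\<Sum>c\<in>C. (c \<bullet> (A *v a) / (c \<bullet> (A *v c))) *\<^sub>R c)"
    have "a - a' \<in> span S"
      unfolding a'_def C(2)[symmetric] by (simp add: span_sum span_scale span_base)
    then have "a' \<in> span (insert a S)" "a \<in> span (insert a' C)"
      using span_mono[of S "insert a S"] span_mono[of C "insert a' C"] C(2)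
        span_diff[of a "insert a S" "a - a'"] span_add[of a' "insert a' C" "a - a'"]
      by (auto simp: span_base)
    then have "span (insert a' C) = span (insert a S)"
      using C(2) span_mono[of S "insert a S"] span_mono[of C "insert a' C"]
      by (auto simp: span_eq span_base)
    moreover have "y \<bullet> (A *v a') = 0" "a' \<bullet> (A *v y) = 0" if "y \<in> C" for y
      using A_orthogonal_projection_step[OF assms(1) C(1,3) that, of a]
        symmetric_matrix_inner_commute[OF pd_matD(1)[OF assms(1)], of y a']
      by (simp_all add: a'_def)
    ultimately show ?case
      using C by (intro exI[of _ "insert a' C"]) (auto simp: pairwise_insert)
  qed
  then show ?thesis using that by blast
qed

lemma A_orthogonal_expansion:
  fixes A :: "real^'n^'n"
  assumes "pd_mat A" "finite C" "pairwise (\<lambda>u v. u \<bullet> (A *v v) = 0) C" "x \<in> span C"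
  shows "x = (\<Sum>c\<in>C. (c \<bullet> (A *v x) / (c \<bullet> (A *v c))) *\<^sub>R c)"
proof -
  define z where "z = x - (\<Sum>c\<in>C. (c \<bullet> (A *v x) / (c \<bullet> (A *v c))) *\<^sub>R c)"
  have "z \<in> span C"
    unfolding z_def by (intro span_diff[OF assms(4)] span_sum span_scale span_base)
  moreover have "linear (\<lambda>w. w \<bullet> (A *v z))"
    by (simp add: linear_iff inner_add_left)
  ultimately have "z \<bullet> (A *v z) = 0"
    using A_orthogonal_projection_step[OF assms(1-3)] linear_eq_0_on_span unfolding z_def by blast
  then have "z = 0"
    using pd_matD(2)[OF assms(1), of z] by (cases "z = 0") auto
  then show ?thesis by (simp add: z_def)
qed

lemma pd_mat_inverse_eq_sum_outer_prod:
  fixes A :: "real^'n^'n"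
  assumes "pd_mat A"
  obtains C where "finite C" "span C = UNIV"
    "matrix_inv A = (\<Sum>c\<in>C. (1 / (c \<bullet> (A *v c))) *\<^sub>R outer_prod c c)"
proof -
  obtain C where C: "finite C" "span C = span (Basis :: (real^'n) set)"
    "pairwise (\<lambda>u v. u \<bullet> (A *v v) = 0) C"
    using A_orthogonal_spanning_set_exists[OF assms, of Basis] by auto
  define N where "N = (\<Sum>c\<in>C. (1 / (c \<bullet> (A *v c))) *\<^sub>R outer_prod c c)"
  have "(N ** A) *v x = x" for x
  proof -
    have "(N ** A) *v x = (\<Sum>c\<in>C. (c \<bullet> (A *v x) / (c \<bullet> (A *v c))) *\<^sub>R c)"
      by (simp add: N_def sum_matrix_vector_mult outer_prod_mult_vector
          flip: matrix_vector_mul_assoc scaleR_matrix_vector_assoc)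
    also have "\<dots> = x"
      using A_orthogonal_expansion[OF assms C(1,3)] C(2) by simp
    finally show ?thesis .
  qed
  then have "N ** A = mat 1" by (simp add: matrix_eq)
  then have "matrix_inv A = N ** (A ** matrix_inv A)"
    by (simp add: matrix_mul_assoc)
  then have "matrix_inv A = N"
    by (simp add: matrix_inv_right[OF pd_mat_invertible[OF assms]])
  then show ?thesis using that C(1,2) by (simp add: N_def)
qed

lemma symmetric_eq_0_of_trace_nonpos:
  fixes A B D :: "real^'n^'n"
  assumes "pd_mat A" "pd_mat B" "transpose D = D"
    and "trace (matrix_inv A ** (D ** B ** D)) \<le> 0"
  shows "D = 0"
proof -
  obtain C where C: "finite C" "span C = UNIV"
    and inv: "matrix_inv A = (\<Sum>c\<in>C. (1 / (c \<bullet> (A *v c))) *\<^sub>R outer_prod c c)"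
    using pd_mat_inverse_eq_sum_outer_prod[OF assms(1)] by blast
  define q where "q c = (D *v c) \<bullet> (B *v (D *v c))" for c
  have q_nonneg: "0 \<le> q c" for c
    using pd_matD(2)[OF assms(2), of "D *v c"] by (cases "D *v c = 0") (auto simp: q_def)
  have "0 \<le> 1 / (c \<bullet> (A *v c))" for c
    using pd_matD(2)[OF assms(1), of c] by (cases "c = 0") auto
  then have term_nonneg: "0 \<le> (1 / (c \<bullet> (A *v c))) * q c" for c
    using q_nonneg by simp
  have D_inner: "x \<bullet> (D *v y) = (D *v x) \<bullet> y" for x y
    using symmetric_matrix_inner_commute[OF assms(3)] by (simp add: inner_commute)
  have "trace (matrix_inv A ** (D ** B ** D)) = (\<Sum>c\<in>C. (1 / (c \<bullet> (A *v c))) * q c)"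
    by (simp add: inv sum_matrix_mult trace_sum trace_scaleR trace_outer_prod_mult q_def D_inner
        flip: scalar_matrix_assoc matrix_vector_mul_assoc)
  moreover have "0 \<le> (\<Sum>c\<in>C. (1 / (c \<bullet> (A *v c))) * q c)"
    using term_nonneg by (rule sum_nonneg)
  ultimately have "(\<Sum>c\<in>C. (1 / (c \<bullet> (A *v c))) * q c) = 0"
    using assms(4) by linarith
  then have zero: "(1 / (c \<bullet> (A *v c))) * q c = 0" if "c \<in> C" for c
    using sum_nonneg_eq_0_iff[OF C(1), of "\<lambda>c. (1 / (c \<bullet> (A *v c))) * q c"] term_nonneg that
    by simp
  have kernel: "D *v c = 0" if "c \<in> C" for c
  proof (cases "c = 0")
    case False
    then have "0 < c \<bullet> (A *v c)" by (rule pd_matD(2)[OF assms(1)])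
    then have "q c = 0" using zero[OF that] by simp
    show ?thesis
    proof (rule ccontr)
      assume "D *v c \<noteq> 0"
      then have "0 < q c" unfolding q_def by (rule pd_matD(2)[OF assms(2)])
      with \<open>q c = 0\<close> show False by simp
    qed
  qed simp
  have "D *v x = 0" for x
    by (rule linear_eq_0_on_span[OF matrix_vector_mul_linear, where b = C]) (simp_all add: kernel C(2))
  then show ?thesis by (simp add: matrix_eq)
qed

lemma optimality_cond_unique:
  fixes S K K' :: "real^'n^'n" and L U :: "ereal^'n^'n"
  assumes "\<And>i j. L$i$j \<le> U$i$j" "pd_mat K" "pd_mat K'"
    and "optimality_cond S L U K" "optimality_cond S L U K'"
  shows "K = K'"
proof -
  define \<Sigma> \<Sigma>' D where "\<Sigma> = matrix_inv K" and "\<Sigma>' = matrix_inv K'" and "D = K' - K"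
  have "transpose D = D"
    by (simp add: D_def transpose_diff pd_matD(1)[OF assms(2)] pd_matD(1)[OF assms(3)])
  have "(\<Sigma>$i$j - \<Sigma>'$i$j) * D$i$j \<le> 0" for i j
  proof -
    have "0 \<le> ((\<Sigma>$i$j - S$i$j) - (\<Sigma>'$i$j - S$i$j)) * (K$i$j - K'$i$j)"
      using lu_subgradient_monotone[OF assms(1)] assms(4,5)
      unfolding optimality_cond_iff_lu_subgradient \<Sigma>_def \<Sigma>'_def by blast
    moreover have "(\<Sigma>$i$j - \<Sigma>'$i$j) * D$i$j
        = - (((\<Sigma>$i$j - S$i$j) - (\<Sigma>'$i$j - S$i$j)) * (K$i$j - K'$i$j))"
      by (simp add: D_def algebra_simps)
    ultimately show ?thesis by linarith
  qed
  then have "(\<Sum>i\<in>UNIV. \<Sum>j\<in>UNIV. (\<Sigma>$i$j - \<Sigma>'$i$j) * D$i$j) \<le> 0"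
    by (intro sum_nonpos)
  also have "(\<Sum>i\<in>UNIV. \<Sum>j\<in>UNIV. (\<Sigma>$i$j - \<Sigma>'$i$j) * D$i$j) = trace ((\<Sigma> - \<Sigma>') ** D)"
    by (simp add: trace_mult_symmetric[OF \<open>transpose D = D\<close>])
  also have "\<Sigma> - \<Sigma>' = \<Sigma> ** D ** \<Sigma>'"
    unfolding \<Sigma>_def \<Sigma>'_def D_def
    using assms(2,3) by (intro matrix_inv_diff pd_mat_invertible)
  also have "trace (\<Sigma> ** D ** \<Sigma>' ** D) = trace ((\<Sigma> ** D) ** (\<Sigma>' ** D))"
    by (simp add: matrix_mul_assoc)
  also have "\<dots> = trace ((\<Sigma>' ** D) ** (\<Sigma> ** D))"
    by (rule trace_mul_sym)
  also have "\<dots> = trace (\<Sigma>' ** (D ** \<Sigma> ** D))"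
    by (simp add: matrix_mul_assoc)
  finally have "D = 0"
    using symmetric_eq_0_of_trace_nonpos[OF assms(3) pd_mat_matrix_inv[OF assms(2)]
        \<open>transpose D = D\<close>] by (simp add: \<Sigma>_def \<Sigma>'_def)
  then show ?thesis by (simp add: D_def)
qed

section \<open>Minimisers satisfy the optimality condition\<close>

lemma minimizer_optimality_cond:
  fixes S Khat :: "real^'n^'n" and L U :: "ereal^'n^'n"
  assumes "transpose S = S" "transpose L = L" "transpose U = U"
    and off_diag: "\<And>i j. i \<noteq> j \<Longrightarrow> L$i$j \<le> 0 \<and> 0 \<le> U$i$j"
    and diag: "\<And>i. L$i$i = 0 \<and> U$i$i = 0"
    and "pd_mat Khat" and min: "\<And>K. pd_mat K \<Longrightarrow> objective S L U Khat \<le> objective S L U K"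
  shows "optimality_cond S L U Khat"
  unfolding optimality_cond_iff_lu_subgradient
proof (intro allI)
  fix i j
  let ?E = "sym_unit i j :: real^'n^'n"
  let ?m = "if i = j then 1 else 2 :: real"
  let ?F = "lu_penalty (L$i$j) (U$i$j)"
  define R where "R = (\<Sum>(a, b)\<in>{(a, b). a \<noteq> b} - {(i, j), (j, i)}.
    lu_penalty (L$a$b) (U$a$b) (Khat$a$b))"
  have "L$i$j \<le> 0 \<and> 0 \<le> U$i$j"
    using off_diag[of i j] diag[of i] by (cases "i = j") auto
  then have lu: "L$i$j \<le> 0" "0 \<le> U$i$j" by auto
  have LU_norm_t: "LU_norm L U (Khat + t *\<^sub>R ?E) = R + ereal ?m * ?F (Khat$i$j + t)" for t
    unfolding R_def using diag
    by (intro LU_norm_add_sym_unit[OF assms(2,3) pd_matD(1)[OF assms(6)]]) auto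
  have "LU_norm L U Khat \<noteq> \<infinity>"
    using min[OF pd_mat_mat_1] by (auto simp: objective_def LU_norm_mat_1)
  moreover have "0 \<le> R"
    unfolding R_def using off_diag by (intro sum_nonneg) (auto intro: lu_penalty_nonneg)
  moreover have "0 \<le> ?F (Khat$i$j)" using lu by (rule lu_penalty_nonneg)
  ultimately have "R \<noteq> \<infinity>" "?F (Khat$i$j) \<noteq> \<infinity>"
    using LU_norm_t[of 0] by auto
  with \<open>0 \<le> R\<close> obtain r where r: "R = ereal r" by (cases R) auto
  obtain d where d: "0 < d" "\<And>t. \<bar>t\<bar> < d \<Longrightarrow> pd_mat (Khat + t *\<^sub>R ?E)"
    using pd_mat_add_small[OF assms(6) transpose_sym_unit] by blast
  define \<phi> where "\<phi> = (\<lambda>t. - ln (det (Khat + t *\<^sub>R ?E)) + trace (S ** (Khat + t *\<^sub>R ?E)) + r)"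
  have objective_t: "objective S L U (Khat + t *\<^sub>R ?E) = ereal (\<phi> t) + ereal ?m * ?F (Khat$i$j + t)"
    for t by (simp add: objective_def \<phi>_def LU_norm_t r flip: add.assoc)
  have deriv: "(\<phi> has_real_derivative - ?m * (matrix_inv Khat$i$j - S$i$j)) (at 0)"
    using DERIV_add[OF has_real_derivative_logdet_trace_sym_unit[OF assms(6,1)] DERIV_const[of r]]
    unfolding \<phi>_def by (simp add: algebra_simps)
  show "lu_subgradient (L$i$j) (U$i$j) (Khat$i$j) (matrix_inv Khat$i$j - S$i$j)"
  proof (rule lu_subgradient_of_local_min[OF lu _ d(1) deriv])
    show "?F (Khat$i$j) \<noteq> \<infinity>" by fact
    show "ereal (\<phi> 0) + ereal ?m * ?F (Khat$i$j) \<le> ereal (\<phi> t) + ereal ?m * ?F (Khat$i$j + t)"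
      if "\<bar>t\<bar> < d" for t
      using min[OF d(2)[OF that]] objective_t[of t] objective_t[of 0] by simp
  qed simp
qed

theorem proposition8p2:
  fixes S :: "real^'d^'d" and L U :: "ereal^'d^'d" and Khat :: "real^'d^'d"
  assumes "psd_mat S"
    and "transpose L = L" and "transpose U = U"
    and "\<And>i j. i \<noteq> j \<Longrightarrow> L$i$j \<le> 0 \<and> 0 \<le> U$i$j"
    and "\<And>i. L$i$i = 0 \<and> U$i$i = 0"
    and "pd_mat Khat"
    and "\<And>K. pd_mat K \<Longrightarrow> objective S L U Khat \<le> objective S L U K"
  shows "optimality_cond S L U Khat \<and>
         (\<forall>K. pd_mat K \<and> optimality_cond S L U K \<longrightarrow> K = Khat)"
proof -
  have "transpose S = S" using assms(1) by (simp add: psd_mat_def)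
  then have opt: "optimality_cond S L U Khat"
    using assms(2-7) by (rule minimizer_optimality_cond)
  have "L$i$j \<le> U$i$j" for i j
    using assms(4)[of i j] assms(5)[of i] by (cases "i = j") auto
  then show ?thesis
    using opt optimality_cond_unique[OF _ _ assms(6) _ opt] by blast
qed

end
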